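(* Problem (RO-$\Sigma$) has an optimal solution $(B,\beta_1,\ldots,\beta_B)$ satisfying $|\{b\in\{1,\ldots,B\}: i\in\beta_b\}|<|\{b\in\{1,\ldots,B\}: j\in\beta_b\}|$ for all candidates $i<j$ that belong to the same contest.
   Context: A ballot style consists of contests $\mathcal{C}=\{1,\ldots,C\}$, candidates $\mathcal{N}=\{1,\ldots,N\}$ partitioned into nonempty sets $\mathcal{N}_c$ ($c\in\mathcal{C}$), and positive integers $v_c$. A filled-out ballot is a subset $\beta\subseteq\mathcal{N}$; $\mathscr{B}=\{\beta\subseteq\mathcal{N}: |\mathcal{N}_c\cap\beta|\le v_c\ \forall c\}$. For $i\in\mathcal{N}_c$: $T^*_i(\beta_1,\ldots,\beta_B)=\sum_{b=1}^B\mathbb{I}\{i\in\beta_b\text{ and }|\mathcal{N}_c\cap\beta_b|\le v_c\}$, and for a bijection $\sigma$ of $\mathcal{N}$, $T^\sigma_i(\beta_1,\ldots,\beta_B)=\sum_{b=1}^B\mathbb{I}\{\sigma(i)\in\beta_b\text{ and }|\{\sigma(j)\in\beta_b: j\in\mathcal{N}_c\}|\le v_c\}$. $\Sigma$ is the set of non-identity bijections $\mathcal{N}\to\mathcal{N}$. Problem (RO-$\Sigma$): minimize $B$ over $B\in\mathbb{N}$ and $\beta_1,\ldots,\beta_B\in\mathscr{B}$ subject to $T^\sigma(\beta_1,\ldots,\beta_B)\neq T^*(\beta_1,\ldots,\beta_B)$ for all $\sigma\in\Sigma$. *)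

theory Defs
  imports Main
begin

text \<open>Ballot style: candidates {1..N}, contests {1..C}; con i is the contest of candidate i,
  so the contest sets are N_c = contest_set N con c. v c is the vote limit of contest c.
  A sequence of ballots beta_1..beta_B is a list of sets (index b ranges over 0..<B).\<close>

definition contest_set :: "nat \<Rightarrow> (nat \<Rightarrow> nat) \<Rightarrow> nat \<Rightarrow> nat set" where
  "contest_set N con c = {i \<in> {1..N}. con i = c}"

definition ballots :: "nat \<Rightarrow> nat \<Rightarrow> (nat \<Rightarrow> nat) \<Rightarrow> (nat \<Rightarrow> nat) \<Rightarrow> nat set set" where
  "ballots N C con v = {\<beta>. \<beta> \<subseteq> {1..N} \<and>
      (\<forall>c\<in>{1..C}. card (contest_set N con c \<inter> \<beta>) \<le> v c)}"

definition Tstar :: "nat \<Rightarrow> (nat \<Rightarrow> nat) \<Rightarrow> (nat \<Rightarrow> nat) \<Rightarrow> nat set list \<Rightarrow> nat \<Rightarrow> nat" where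
  "Tstar N con v bs i = card {b. b < length bs \<and> i \<in> bs ! b \<and>
      card (contest_set N con (con i) \<inter> bs ! b) \<le> v (con i)}"

definition Tsigma :: "nat \<Rightarrow> (nat \<Rightarrow> nat) \<Rightarrow> (nat \<Rightarrow> nat) \<Rightarrow> (nat \<Rightarrow> nat) \<Rightarrow> nat set list \<Rightarrow> nat \<Rightarrow> nat" where
  "Tsigma N con v \<sigma> bs i = card {b. b < length bs \<and> \<sigma> i \<in> bs ! b \<and>
      card {\<sigma> j | j. j \<in> contest_set N con (con i) \<and> \<sigma> j \<in> bs ! b} \<le> v (con i)}"

definition Sigma_set :: "nat \<Rightarrow> (nat \<Rightarrow> nat) set" where
  "Sigma_set N = {\<sigma>. bij_betw \<sigma> {1..N} {1..N} \<and> (\<exists>i\<in>{1..N}. \<sigma> i \<noteq> i)}"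

definition RO_feasible :: "nat \<Rightarrow> nat \<Rightarrow> (nat \<Rightarrow> nat) \<Rightarrow> (nat \<Rightarrow> nat) \<Rightarrow> nat set list \<Rightarrow> bool" where
  "RO_feasible N C con v bs \<longleftrightarrow> set bs \<subseteq> ballots N C con v \<and>
     (\<forall>\<sigma>\<in>Sigma_set N. \<exists>i\<in>{1..N}. Tsigma N con v \<sigma> bs i \<noteq> Tstar N con v bs i)"

definition RO_optimal :: "nat \<Rightarrow> nat \<Rightarrow> (nat \<Rightarrow> nat) \<Rightarrow> (nat \<Rightarrow> nat) \<Rightarrow> nat set list \<Rightarrow> bool" where
  "RO_optimal N C con v bs \<longleftrightarrow> RO_feasible N C con v bs \<and>
     (\<forall>bs'. RO_feasible N C con v bs' \<longrightarrow> length bs \<le> length bs')"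

definition appearances :: "nat set list \<Rightarrow> nat \<Rightarrow> nat" where
  "appearances bs i = card {b. b < length bs \<and> i \<in> bs ! b}"

end

theory Submission
  imports Defs "HOL-Combinatorics.Transposition"
begin

(* The list with k copies of the ballot {k}, k = 1..N, is feasible (on it T*_i = i and
   T^sigma_i = sigma i), so optimal solutions exist; take one maximising the sum over k of
   k times the number of appearances of k. Relabelling candidates by a contest-preserving
   involution pi maps optimal solutions to optimal ones, turning T^sigma into T^(pi sigma pi).
   For candidates i < j of one contest, feasibility against the transposition (i j) forces
   them to appear a different number of times, and if i appeared more often, swapping them
   would increase the weight. *)

definition contest_involution :: "nat \<Rightarrow> (nat \<Rightarrow> nat) \<Rightarrow> (nat \<Rightarrow> nat) \<Rightarrow> bool" where
  "contest_involution N con \<pi> \<longleftrightarrow>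
     (\<forall>x\<in>{1..N}. \<pi> x \<in> {1..N} \<and> \<pi> (\<pi> x) = x \<and> con (\<pi> x) = con x)"

definition permute_ballots :: "(nat \<Rightarrow> nat) \<Rightarrow> nat set list \<Rightarrow> nat set list" where
  "permute_ballots \<pi> bs = map ((`) \<pi>) bs"

definition weighted_appearances :: "nat \<Rightarrow> nat set list \<Rightarrow> nat" where
  "weighted_appearances N bs = (\<Sum>k\<in>{1..N}. k * appearances bs k)"

fun staircase_ballots :: "nat \<Rightarrow> nat set list" where
  "staircase_ballots 0 = []"
| "staircase_ballots (Suc n) = staircase_ballots n @ replicate (Suc n) {Suc n}"

lemma Tstar_eq_length_filter:
  "Tstar N con v bs i =
     length (filter (\<lambda>\<beta>. i \<in> \<beta> \<and> card (contest_set N con (con i) \<inter> \<beta>) \<le> v (con i)) bs)"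
  unfolding Tstar_def length_filter_conv_card by simp

lemma Tsigma_eq_length_filter:
  "Tsigma N con v \<sigma> bs i =
     length (filter (\<lambda>\<beta>. \<sigma> i \<in> \<beta> \<and> card (\<sigma> ` contest_set N con (con i) \<inter> \<beta>) \<le> v (con i)) bs)"
proof -
  have "{\<sigma> j |j. j \<in> A \<and> \<sigma> j \<in> \<beta>} = \<sigma> ` A \<inter> \<beta>" for A \<beta> by auto
  then show ?thesis unfolding Tsigma_def length_filter_conv_card by simp
qed

lemma appearances_eq_length_filter: "appearances bs i = length (filter ((\<in>) i) bs)"
  unfolding appearances_def length_filter_conv_card by simp

lemma appearances_le_length: "appearances bs i \<le> length bs"
  unfolding appearances_eq_length_filter by (rule length_filter_le)

lemma Tstar_eq_appearances:
  assumes "set bs \<subseteq> ballots N C con v" and "con i \<in> {1..C}"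
  shows "Tstar N con v bs i = appearances bs i"
  unfolding Tstar_eq_length_filter appearances_eq_length_filter
  using assms by (intro arg_cong[where f = length] filter_cong) (auto simp: ballots_def)

lemma Tsigma_eq_appearances_if_small_ballots:
  assumes "\<forall>\<beta>\<in>set bs. finite \<beta> \<and> card \<beta> \<le> v (con i)"
  shows "Tsigma N con v \<sigma> bs i = appearances bs (\<sigma> i)"
  unfolding Tsigma_eq_length_filter appearances_eq_length_filter
  using assms by (intro arg_cong[where f = length] filter_cong) (auto intro: card_mono le_trans)

lemma contest_set_subset: "contest_set N con c \<subseteq> {1..N}"
  unfolding contest_set_def by blast

lemma contest_involution_transpose:
  assumes "i \<in> {1..N}" "j \<in> {1..N}" "con i = con j"
  shows "contest_involution N con (Transposition.transpose i j)"
  using assms unfolding contest_involution_def transpose_def by auto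

context
  fixes N :: nat and con \<pi> :: "nat \<Rightarrow> nat"
  assumes involution: "contest_involution N con \<pi>"
begin

lemma involution_closed: "x \<in> {1..N} \<Longrightarrow> \<pi> x \<in> {1..N}"
  and involution_involutive: "x \<in> {1..N} \<Longrightarrow> \<pi> (\<pi> x) = x"
  and involution_con: "x \<in> {1..N} \<Longrightarrow> con (\<pi> x) = con x"
  using involution unfolding contest_involution_def by auto

lemma involution_bij: "bij_betw \<pi> {1..N} {1..N}"
  using involution_closed involution_involutive
  by (intro bij_betw_byWitness[where f' = \<pi>]) blast+

lemma involution_inj: "inj_on \<pi> {1..N}"
  using involution_bij by (rule bij_betw_imp_inj_on)

lemma involution_image_subset: "A \<subseteq> {1..N} \<Longrightarrow> \<pi> ` A \<subseteq> {1..N}"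
  using involution_closed by auto

lemma involution_image_image: "A \<subseteq> {1..N} \<Longrightarrow> \<pi> ` \<pi> ` A = A"
  by (force simp: image_image involution_involutive)

lemma involution_image_contest_set: "\<pi> ` contest_set N con c = contest_set N con c"
proof -
  have "\<pi> ` contest_set N con c \<subseteq> contest_set N con c"
    unfolding contest_set_def using involution_closed involution_con by fastforce
  with contest_set_subset show ?thesis
    by (metis image_mono involution_image_image subset_antisym)
qed

lemma mem_involution_image_iff:
  assumes "\<beta> \<subseteq> {1..N}" "k \<in> {1..N}"
  shows "k \<in> \<pi> ` \<beta> \<longleftrightarrow> \<pi> k \<in> \<beta>"
  using inj_on_image_mem_iff[OF involution_inj assms(2) involution_image_subset[OF assms(1)]]
    involution_image_image[OF assms(1)] by simp

lemma card_Int_involution_image: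
  assumes "A \<subseteq> {1..N}" "\<beta> \<subseteq> {1..N}"
  shows "card (A \<inter> \<pi> ` \<beta>) = card (\<pi> ` A \<inter> \<beta>)"
proof -
  have "\<pi> ` (A \<inter> \<pi> ` \<beta>) = \<pi> ` A \<inter> \<beta>"
    using inj_on_image_Int[OF involution_inj assms(1) involution_image_subset[OF assms(2)]]
      involution_image_image[OF assms(2)] by simp
  moreover have "inj_on \<pi> (A \<inter> \<pi> ` \<beta>)"
    using involution_inj by (rule inj_on_subset) (use assms(1) in auto)
  ultimately show ?thesis by (metis card_image)
qed

lemma card_contest_set_Int_involution_image:
  "\<beta> \<subseteq> {1..N} \<Longrightarrow> card (contest_set N con c \<inter> \<pi> ` \<beta>) = card (contest_set N con c \<inter> \<beta>)"
  using card_Int_involution_image[OF contest_set_subset] by (simp add: involution_image_contest_set)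

lemma Tsigma_involution:
  "i \<in> {1..N} \<Longrightarrow> Tsigma N con v \<pi> bs i = Tstar N con v bs (\<pi> i)"
  by (simp add: Tsigma_eq_length_filter Tstar_eq_length_filter
      involution_image_contest_set involution_con)

context
  fixes bs :: "nat set list"
  assumes valid: "\<forall>\<beta>\<in>set bs. \<beta> \<subseteq> {1..N}"
begin

lemma appearances_permute_ballots:
  "i \<in> {1..N} \<Longrightarrow> appearances (permute_ballots \<pi> bs) i = appearances bs (\<pi> i)"
  unfolding appearances_eq_length_filter permute_ballots_def filter_map length_map
  using valid by (intro arg_cong[where f = length] filter_cong) (auto simp: mem_involution_image_iff)

lemma Tstar_permute_ballots:
  assumes "i \<in> {1..N}"
  shows "Tstar N con v (permute_ballots \<pi> bs) i = Tstar N con v bs (\<pi> i)"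
  unfolding Tstar_eq_length_filter permute_ballots_def filter_map length_map
  using valid assms
  by (intro arg_cong[where f = length] filter_cong)
    (auto simp: mem_involution_image_iff involution_con card_contest_set_Int_involution_image)

lemma Tsigma_permute_ballots:
  assumes "\<sigma> ` {1..N} \<subseteq> {1..N}" "i \<in> {1..N}"
  shows "Tsigma N con v \<sigma> (permute_ballots \<pi> bs) i = Tsigma N con v (\<pi> \<circ> \<sigma> \<circ> \<pi>) bs (\<pi> i)"
proof -
  let ?A = "\<sigma> ` contest_set N con (con i)"
  have A: "?A \<subseteq> {1..N}" using assms(1) by (auto simp: contest_set_def)
  have "(\<pi> \<circ> \<sigma> \<circ> \<pi>) ` contest_set N con (con (\<pi> i)) = \<pi> ` \<sigma> ` \<pi> ` contest_set N con (con i)"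
    by (simp add: image_comp involution_con[OF assms(2)])
  also have "\<dots> = \<pi> ` ?A" by (simp add: involution_image_contest_set)
  finally have conj_image: "(\<pi> \<circ> \<sigma> \<circ> \<pi>) ` contest_set N con (con (\<pi> i)) = \<pi> ` ?A" .
  have "\<sigma> i \<in> \<pi> ` \<beta> \<and> card (?A \<inter> \<pi> ` \<beta>) \<le> v (con i) \<longleftrightarrow>
        (\<pi> \<circ> \<sigma> \<circ> \<pi>) (\<pi> i) \<in> \<beta> \<and> card (\<pi> ` ?A \<inter> \<beta>) \<le> v (con (\<pi> i))"
    if "\<beta> \<in> set bs" for \<beta>
  proof -
    have \<beta>: "\<beta> \<subseteq> {1..N}" using valid that by blast
    have "\<sigma> i \<in> {1..N}" using assms by blast
    then show ?thesis
      using mem_involution_image_iff[OF \<beta>] card_Int_involution_image[OF A \<beta>]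
      by (simp add: involution_involutive[OF assms(2)] involution_con[OF assms(2)])
  qed
  then show ?thesis
    unfolding Tsigma_eq_length_filter permute_ballots_def filter_map length_map conj_image
    by (intro arg_cong[where f = length] filter_cong) simp_all
qed

end

lemma Sigma_set_conjugate:
  assumes "\<sigma> \<in> Sigma_set N"
  shows "\<pi> \<circ> \<sigma> \<circ> \<pi> \<in> Sigma_set N"
proof -
  have \<sigma>: "bij_betw \<sigma> {1..N} {1..N}" and "\<exists>x\<in>{1..N}. \<sigma> x \<noteq> x"
    using assms unfolding Sigma_set_def by auto
  then obtain x where x: "x \<in> {1..N}" "\<sigma> x \<noteq> x" by blast
  have "bij_betw (\<pi> \<circ> \<sigma> \<circ> \<pi>) {1..N} {1..N}"
    using bij_betw_trans[OF bij_betw_trans[OF involution_bij \<sigma>] involution_bij]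
    by (simp add: comp_assoc)
  moreover have "(\<pi> \<circ> \<sigma> \<circ> \<pi>) (\<pi> x) \<noteq> \<pi> x"
    using x bij_betw_apply[OF \<sigma> x(1)] involution_involutive by (metis comp_apply)
  ultimately show ?thesis
    using involution_closed[OF x(1)] unfolding Sigma_set_def by blast
qed

lemma RO_feasible_permute_ballots:
  assumes feasible: "RO_feasible N C con v bs"
  shows "RO_feasible N C con v (permute_ballots \<pi> bs)"
proof -
  have ballots: "set bs \<subseteq> ballots N C con v"
    using feasible unfolding RO_feasible_def by blast
  then have valid: "\<forall>\<beta>\<in>set bs. \<beta> \<subseteq> {1..N}" unfolding ballots_def by blast
  have "set (permute_ballots \<pi> bs) \<subseteq> ballots N C con v"
  proof
    fix \<gamma> assume "\<gamma> \<in> set (permute_ballots \<pi> bs)"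
    then obtain \<beta> where \<beta>: "\<beta> \<in> set bs" "\<gamma> = \<pi> ` \<beta>" unfolding permute_ballots_def by auto
    have "card (contest_set N con c \<inter> \<pi> ` \<beta>) = card (contest_set N con c \<inter> \<beta>)" for c
      using card_contest_set_Int_involution_image valid \<beta>(1) by blast
    then show "\<gamma> \<in> ballots N C con v"
      using ballots \<beta> valid involution_image_subset by (auto simp: ballots_def)
  qed
  moreover have "\<exists>k\<in>{1..N}. Tsigma N con v \<sigma> (permute_ballots \<pi> bs) k
                              \<noteq> Tstar N con v (permute_ballots \<pi> bs) k"
    if \<sigma>: "\<sigma> \<in> Sigma_set N" for \<sigma>
  proof -
    obtain k where k: "k \<in> {1..N}" "Tsigma N con v (\<pi> \<circ> \<sigma> \<circ> \<pi>) bs k \<noteq> Tstar N con v bs k"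
      using feasible Sigma_set_conjugate[OF \<sigma>] unfolding RO_feasible_def by blast
    have "\<sigma> ` {1..N} \<subseteq> {1..N}"
      using \<sigma> unfolding Sigma_set_def by (auto dest: bij_betw_imp_surj_on)
    then show ?thesis
      using k involution_closed[OF k(1)] involution_involutive[OF k(1)]
        Tsigma_permute_ballots[OF valid] Tstar_permute_ballots[OF valid]
      by metis
  qed
  ultimately show ?thesis unfolding RO_feasible_def by blast
qed

lemma RO_optimal_permute_ballots:
  "RO_optimal N C con v bs \<Longrightarrow> RO_optimal N C con v (permute_ballots \<pi> bs)"
  unfolding RO_optimal_def using RO_feasible_permute_ballots
  by (simp add: permute_ballots_def)

end

lemma appearances_staircase_ballots:
  "appearances (staircase_ballots n) m = (if m \<in> {1..n} then m else 0)"
  unfolding appearances_eq_length_filter by (induction n) (auto simp: filter_replicate)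

lemma RO_feasible_staircase_ballots:
  assumes con: "con ` {1..N} = {1..C}" and v: "\<forall>c\<in>{1..C}. v c > 0"
  shows "RO_feasible N C con v (staircase_ballots N)"
proof -
  have singletons: "\<exists>k\<in>{1..N}. \<beta> = {k}" if "\<beta> \<in> set (staircase_ballots N)" for \<beta>
    using that by (induction N) auto
  have "set (staircase_ballots N) \<subseteq> ballots N C con v"
  proof
    fix \<beta> assume "\<beta> \<in> set (staircase_ballots N)"
    then obtain k where "k \<in> {1..N}" "\<beta> = {k}" using singletons by blast
    moreover have "card (contest_set N con c \<inter> {k}) \<le> v c" if "c \<in> {1..C}" for c
      using card_mono[of "{k}" "contest_set N con c \<inter> {k}"] v that by fastforce
    ultimately show "\<beta> \<in> ballots N C con v" by (auto simp: ballots_def)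
  qed
  moreover have "\<exists>i\<in>{1..N}. Tsigma N con v \<sigma> (staircase_ballots N) i
                              \<noteq> Tstar N con v (staircase_ballots N) i"
    if "\<sigma> \<in> Sigma_set N" for \<sigma>
  proof -
    obtain i where i: "i \<in> {1..N}" "\<sigma> i \<noteq> i" and \<sigma>i: "\<sigma> i \<in> {1..N}"
      using \<open>\<sigma> \<in> Sigma_set N\<close> unfolding Sigma_set_def by (auto dest: bij_betw_apply)
    have "con i \<in> {1..C}" using con i(1) by blast
    then have "v (con i) > 0" using v by blast
    then have "\<forall>\<beta>\<in>set (staircase_ballots N). finite \<beta> \<and> card \<beta> \<le> v (con i)"
      using singletons by fastforce
    then have "Tsigma N con v \<sigma> (staircase_ballots N) i = \<sigma> i"
      using \<sigma>i by (simp add: Tsigma_eq_appearances_if_small_ballots appearances_staircase_ballots)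
    moreover have "Tstar N con v (staircase_ballots N) i = i"
      using Tstar_eq_appearances[OF \<open>set (staircase_ballots N) \<subseteq> ballots N C con v\<close> \<open>con i \<in> {1..C}\<close>] i(1)
      by (simp add: appearances_staircase_ballots)
    ultimately show ?thesis using i by metis
  qed
  ultimately show ?thesis unfolding RO_feasible_def by blast
qed

lemma sum_mult_transpose:
  fixes f g :: "'a \<Rightarrow> 'b::comm_semiring_1"
  assumes "finite A" "i \<in> A" "j \<in> A" "i \<noteq> j"
  shows "(\<Sum>k\<in>A. f k * g (Transposition.transpose i j k)) + (f i * g i + f j * g j)
       = (\<Sum>k\<in>A. f k * g k) + (f i * g j + f j * g i)"
proof -
  let ?R = "A - {i, j}"
  have A: "A = insert i (insert j ?R)" and ij: "i \<notin> insert j ?R" "j \<notin> ?R"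
    using assms by auto
  have "(\<Sum>k\<in>?R. f k * g (Transposition.transpose i j k)) = (\<Sum>k\<in>?R. f k * g k)"
    by (rule sum.cong) auto
  then show ?thesis
    using assms(1,4) ij by (subst (1 2) A) (simp add: algebra_simps)
qed

lemma mult_add_mult_less_swap:
  fixes i j a b :: nat
  assumes "i < j" "b < a"
  shows "i * a + j * b < i * b + j * a"
proof -
  obtain e where "j = Suc (i + e)" using assms(1) less_imp_Suc_add by blast
  moreover obtain d where "a = Suc (b + d)" using assms(2) less_imp_Suc_add by blast
  ultimately show ?thesis by (simp add: algebra_simps)
qed

lemma weighted_appearances_le: "weighted_appearances N bs \<le> (\<Sum>k\<in>{1..N}. k) * length bs"
  unfolding weighted_appearances_def sum_distrib_right
  by (intro sum_mono mult_left_mono appearances_le_length) simp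

lemma weighted_appearances_transpose_less:
  assumes valid: "\<forall>\<beta>\<in>set bs. \<beta> \<subseteq> {1..N}"
    and ij: "i \<in> {1..N}" "j \<in> {1..N}" "i < j"
    and less: "appearances bs j < appearances bs i"
  shows "weighted_appearances N bs
       < weighted_appearances N (permute_ballots (Transposition.transpose i j) bs)"
proof -
  let ?\<tau> = "Transposition.transpose i j"
  have "weighted_appearances N (permute_ballots ?\<tau> bs) = (\<Sum>k\<in>{1..N}. k * appearances bs (?\<tau> k))"
    unfolding weighted_appearances_def
    using appearances_permute_ballots[OF contest_involution_transpose[of i N j "\<lambda>_. 0"] valid] ij
    by simp
  moreover have "i * appearances bs i + j * appearances bs j < i * appearances bs j + j * appearances bs i"
    using ij(3) less by (rule mult_add_mult_less_swap)
  ultimately show ?thesis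
    using sum_mult_transpose[of "{1..N}" i j id "appearances bs"] ij
    unfolding weighted_appearances_def by simp
qed

lemma RO_feasible_appearances_distinct:
  assumes feasible: "RO_feasible N C con v bs" and con: "con ` {1..N} \<subseteq> {1..C}"
    and ij: "i \<in> {1..N}" "j \<in> {1..N}" "i \<noteq> j" "con i = con j"
  shows "appearances bs i \<noteq> appearances bs j"
proof -
  let ?\<tau> = "Transposition.transpose i j"
  have \<tau>: "contest_involution N con ?\<tau>" using ij(1,2,4) by (rule contest_involution_transpose)
  have "?\<tau> \<in> Sigma_set N"
    using involution_bij[OF \<tau>] ij unfolding Sigma_set_def by force
  then obtain k where k: "k \<in> {1..N}" "Tsigma N con v ?\<tau> bs k \<noteq> Tstar N con v bs k"
    using feasible unfolding RO_feasible_def by blast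
  have ballots: "set bs \<subseteq> ballots N C con v" using feasible unfolding RO_feasible_def by blast
  have "Tstar N con v bs (?\<tau> k) \<noteq> Tstar N con v bs k"
    using k Tsigma_involution[OF \<tau> k(1)] by simp
  moreover have "con k \<in> {1..C}" "con (?\<tau> k) \<in> {1..C}"
    using con k(1) involution_closed[OF \<tau> k(1)] by blast+
  ultimately have "appearances bs (?\<tau> k) \<noteq> appearances bs k"
    using Tstar_eq_appearances[OF ballots] by metis
  then show ?thesis by (cases "k = i \<or> k = j") auto
qed

lemma ex_RO_optimal_max_weighted_appearances:
  assumes "RO_feasible N C con v bs0"
  obtains bs where "RO_optimal N C con v bs"
    and "\<And>bs'. RO_optimal N C con v bs' \<Longrightarrow> weighted_appearances N bs' \<le> weighted_appearances N bs"
proof -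
  obtain bs1 where bs1: "RO_feasible N C con v bs1"
    and shortest: "\<forall>bs'. RO_feasible N C con v bs' \<longrightarrow> length bs1 \<le> length bs'"
    using ex_has_least_nat[of "RO_feasible N C con v" bs0 length] assms by blast
  have "RO_optimal N C con v bs1" unfolding RO_optimal_def using bs1 shortest by blast
  moreover have "\<forall>bs'. RO_optimal N C con v bs' \<longrightarrow>
      weighted_appearances N bs' < (\<Sum>k\<in>{1..N}. k) * length bs1 + 1"
    using bs1 shortest weighted_appearances_le[of N] unfolding RO_optimal_def
    by (metis le_antisym less_Suc_eq_le Suc_eq_plus1)
  ultimately show ?thesis
    using Lattices_Big.ex_has_greatest_nat[of "RO_optimal N C con v" bs1 "weighted_appearances N"] that
    by blast
qed

theorem proposition1:
  fixes N C :: nat and con v :: "nat \<Rightarrow> nat"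
  assumes "con ` {1..N} = {1..C}"
    and "\<forall>c\<in>{1..C}. v c > 0"
  shows "\<exists>bs. RO_optimal N C con v bs \<and>
           (\<forall>i\<in>{1..N}. \<forall>j\<in>{1..N}. i < j \<and> con i = con j \<longrightarrow>
              appearances bs i < appearances bs j)"
proof -
  obtain bs where optimal: "RO_optimal N C con v bs"
    and maximal: "\<And>bs'. RO_optimal N C con v bs' \<Longrightarrow> weighted_appearances N bs' \<le> weighted_appearances N bs"
    using ex_RO_optimal_max_weighted_appearances[OF RO_feasible_staircase_ballots[OF assms]] by blast
  have feasible: "RO_feasible N C con v bs" using optimal unfolding RO_optimal_def by blast
  then have valid: "\<forall>\<beta>\<in>set bs. \<beta> \<subseteq> {1..N}" unfolding RO_feasible_def ballots_def by blast
  have "appearances bs i < appearances bs j"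
    if ij: "i \<in> {1..N}" "j \<in> {1..N}" "i < j" "con i = con j" for i j
  proof (rule ccontr)
    assume "\<not> appearances bs i < appearances bs j"
    with RO_feasible_appearances_distinct[OF feasible _ ij(1,2)] assms(1) ij
    have "appearances bs j < appearances bs i" by fastforce
    then have "weighted_appearances N bs
             < weighted_appearances N (permute_ballots (Transposition.transpose i j) bs)"
      using weighted_appearances_transpose_less[OF valid ij(1-3)] by blast
    moreover have "RO_optimal N C con v (permute_ballots (Transposition.transpose i j) bs)"
      using RO_optimal_permute_ballots[OF contest_involution_transpose[OF ij(1,2,4)] optimal] .
    ultimately show False using maximal by (meson not_le)
  qed
  then show ?thesis using optimal by blast
qed

end
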